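(* Let $\kappa_1,\kappa_2,d_1,d_2>0$ be constants (specific heats at constant volume and thermal conductivities of the liquid phase (index $1$) and vapor phase (index $2$)), let $\ell<0$ be a constant (the latent heat), let $j_\Gamma>0$ be a constant (the phase flux), let $r>0$ be a constant (the volume specific heat source), and let $\theta_*\in\mathbf{R}$ (the given interface temperature) and $\theta_{\mathrm{in}}<\theta_*$ (the entrance temperature). Consider the stationary free boundary problem of finding $x_*>0$, $\theta_1\colon[0,x_*]\to\mathbf{R}$ and $\theta_2\colon[x_*,\infty)\to\mathbf{R}$ such that \begin{align*} &\kappa_1 j_\Gamma \theta_1' - d_1\theta_1'' = r \quad\text{in } (0,x_* ),\\ &\kappa_2 j_\Gamma \theta_2' - d_2\theta_2'' = r \quad\text{in } (x_*,\infty),\\ &\theta_1(x_* )=\theta_2(x_* )=\theta_*,\\ &\ell j_\Gamma + d_2\theta_2'(x_* ) - d_1\theta_1'(x_* ) = 0,\\ &\theta_1(0)=\theta_{\mathrm{in}},\qquad \theta_1\le\theta_* \text{ on } [0,x_*], \end{align*} and $\theta_2$ grows at most linearly as $x\to\infty$. Then \[ (-\ell)\le \frac{d_2 r}{\kappa_2 j_\Gamma^2} \] holds if and only if this problem has a unique solution $(\theta_1,\theta_2,x_* )$. Moreover, the location $x_*=x_*(\theta_{\mathrm{in}},j_\Gamma)$ of the interface is strictly decreasing in $\theta_{\mathrm{in}}$ and strictly increasing in $j_\Gamma$, and $x_*\to\infty$ as $j_\Gamma\to\infty$ (with $\theta_{\mathrm{in}}$ fixed) or as $\theta_{\mathrm{in}}\to-\infty$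 (with $j_\Gamma$ fixed).
   Context: This is the one-dimensional stationary two-phase Stefan problem with drift on the half line $(0,\infty)$: the liquid phase occupies $(0,x_* )$, the vapor phase occupies $(x_*,\infty)$, and the point $x_*$ is called the dryout point. The phase flux is $j_\Gamma=\rho_1u_1$ where $\rho_1>0$ is the liquid density and $u_1>0$ the liquid velocity, and $r=\rho_1r_1=\rho_2r_2$ is the (common) volume specific internal heat source. *)

theory Defs
  imports "HOL-Analysis.Analysis"
begin

text \<open>The stationary two-phase Stefan system WITHOUT the sign constraint
  theta1 <= theta_star.\<close>

definition stefan_system ::
  "real \<Rightarrow> real \<Rightarrow> real \<Rightarrow> real \<Rightarrow> real \<Rightarrow> real \<Rightarrow> real \<Rightarrow> real \<Rightarrow> real \<Rightarrow>
   real \<Rightarrow> (real \<Rightarrow> real) \<Rightarrow> (real \<Rightarrow> real) \<Rightarrow> bool" where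
  "stefan_system k1 k2 d1 d2 l j r ths thin xs th1 th2 \<longleftrightarrow>
     xs > 0 \<and>
     continuous_on {0..xs} th1 \<and>
     continuous_on {xs..} th2 \<and>
     (\<exists>D1 DD1. \<forall>x\<in>{0<..<xs}. (th1 has_real_derivative D1 x) (at x) \<and>
                 (D1 has_real_derivative DD1 x) (at x) \<and>
                 k1 * j * D1 x - d1 * DD1 x = r) \<and>
     (\<exists>D2 DD2. \<forall>x\<in>{xs<..}. (th2 has_real_derivative D2 x) (at x) \<and>
                 (D2 has_real_derivative DD2 x) (at x) \<and>
                 k2 * j * D2 x - d2 * DD2 x = r) \<and>
     th1 xs = ths \<and> th2 xs = ths \<and>
     (\<exists>p1 p2. (th1 has_real_derivative p1) (at xs within {0..xs}) \<and>
              (th2 has_real_derivative p2) (at xs within {xs..}) \<and>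
              l * j + d2 * p2 - d1 * p1 = 0) \<and>
     th1 0 = thin \<and>
     (\<exists>C. \<forall>x\<in>{xs..}. \<bar>th2 x\<bar> \<le> C * (1 + x))"

definition stefan_problem ::
  "real \<Rightarrow> real \<Rightarrow> real \<Rightarrow> real \<Rightarrow> real \<Rightarrow> real \<Rightarrow> real \<Rightarrow> real \<Rightarrow> real \<Rightarrow>
   real \<Rightarrow> (real \<Rightarrow> real) \<Rightarrow> (real \<Rightarrow> real) \<Rightarrow> bool" where
  "stefan_problem k1 k2 d1 d2 l j r ths thin xs th1 th2 \<longleftrightarrow>
     stefan_system k1 k2 d1 d2 l j r ths thin xs th1 th2 \<and>
     (\<forall>x\<in>{0..xs}. th1 x \<le> ths)"

definition stefan_unique_solution ::
  "real \<Rightarrow> real \<Rightarrow> real \<Rightarrow> real \<Rightarrow> real \<Rightarrow> real \<Rightarrow> real \<Rightarrow> real \<Rightarrow> real \<Rightarrow> bool" where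
  "stefan_unique_solution k1 k2 d1 d2 l j r ths thin \<longleftrightarrow>
     (\<exists>xs th1 th2. stefan_problem k1 k2 d1 d2 l j r ths thin xs th1 th2) \<and>
     (\<forall>xs th1 th2 xs' th1' th2'.
        stefan_problem k1 k2 d1 d2 l j r ths thin xs th1 th2 \<and>
        stefan_problem k1 k2 d1 d2 l j r ths thin xs' th1' th2' \<longrightarrow>
        xs = xs' \<and> (\<forall>x\<in>{0..xs}. th1 x = th1' x) \<and> (\<forall>x\<in>{xs..}. th2 x = th2' x))"

end

theory Submission
  imports Defs "HOL-Real_Asymp.Real_Asymp"
begin

text \<open>On each phase the equation is linear with constant coefficients, so a solution is an affine
  function plus a multiple of \<open>exp (k j x / d)\<close>. Linear growth removes the exponential in the
  vapor, so \<open>\<theta>\<^sub>2\<close> is linear with slope \<open>r / (k\<^sub>2 j)\<close>; the Stefan condition then fixes the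
  liquid gradient \<open>p\<close> at the dryout point, and \<open>\<theta>\<^sub>1 x = \<theta>\<^sub>* - F\<^sub>j (x\<^sub>* - x)\<close> for an explicit
  profile \<open>F\<^sub>j\<close>, the dryout point being a root of \<open>F\<^sub>j x\<^sub>* = \<theta>\<^sub>* - \<theta>\<^sub>i\<^sub>n\<close>.
  Since \<open>F\<^sub>j 0 = 0\<close> and \<open>F\<^sub>j' 0 = p\<close>, the constraint \<open>\<theta>\<^sub>1 \<le> \<theta>\<^sub>*\<close> holds iff \<open>p \<ge> 0\<close>, which is the
  condition \<open>- l \<le> d\<^sub>2 r / (k\<^sub>2 j\<^sup>2)\<close>. The profile is strictly increasing beyond any point
  where it is positive, which gives uniqueness and monotonicity in \<open>\<theta>\<^sub>i\<^sub>n\<close>; it is strictly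
  decreasing in \<open>j\<close> (for \<open>l < 0\<close>), giving monotonicity in \<open>j\<close>. The bound
  \<open>F\<^sub>j s \<le> r s / (k\<^sub>1 j) + d\<^sub>2 r / (k\<^sub>1 k\<^sub>2 j\<^sup>2)\<close> forces \<open>x\<^sub>* \<rightarrow> \<infinity>\<close> as \<open>j \<rightarrow> \<infinity>\<close>, and boundedness
  of \<open>F\<^sub>j\<close> on compact sets forces \<open>x\<^sub>* \<rightarrow> \<infinity>\<close> as \<open>\<theta>\<^sub>i\<^sub>n \<rightarrow> -\<infinity>\<close>.\<close>

lemma has_real_derivative_unique_on:
  assumes "(f has_real_derivative p) (at x within S)" and "(g has_real_derivative q) (at x within S)"
    and "\<And>y. y \<in> S \<Longrightarrow> f y = g y" and "x \<in> S" and "at x within S \<noteq> bot"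
  shows "p = q"
proof -
  have "(f has_real_derivative q) (at x within S)"
    by (rule has_field_derivative_transform_within[OF assms(2) zero_less_one assms(4)])
      (simp add: assms(3))
  with assms(1) show ?thesis
    using assms(5) by (rule has_field_derivative_unique)
qed

lemma first_order_linear_ode_solution:
  fixes D DD :: "real \<Rightarrow> real"
  assumes "convex S" and "k \<noteq> 0" and "d \<noteq> 0"
    and ode: "\<And>x. x \<in> S \<Longrightarrow> (D has_real_derivative DD x) (at x) \<and> k * D x - d * DD x = r"
  obtains K where "\<And>x. x \<in> S \<Longrightarrow> D x = r / k + K * exp (k / d * x)"
proof -
  have "\<exists>K. \<forall>x\<in>S. (D x - r / k) * exp (- (k / d * x)) = K"
  proof (rule has_field_derivative_zero_constant[OF \<open>convex S\<close>])
    fix x assume "x \<in> S"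
    with ode have D': "(D has_real_derivative DD x) (at x)" and DD: "DD x = (k * D x - r) / d"
      using \<open>d \<noteq> 0\<close> by (auto simp: field_simps)
    have "((\<lambda>x. (D x - r / k) * exp (- (k / d * x))) has_real_derivative 0) (at x)"
      using assms(2,3) by (auto intro!: derivative_eq_intros D' simp: DD field_simps)
    then show "((\<lambda>x. (D x - r / k) * exp (- (k / d * x))) has_real_derivative 0) (at x within S)"
      by (rule has_field_derivative_at_within)
  qed
  then obtain K where "\<And>x. x \<in> S \<Longrightarrow> (D x - r / k) * exp (- (k / d * x)) = K" by blast
  then show thesis
    by (intro that[of K]) (auto simp: exp_minus field_simps)
qed

lemma second_order_linear_ode_solution:
  fixes f D DD :: "real \<Rightarrow> real"
  assumes "convex S" and "k \<noteq> 0" and "d \<noteq> 0"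
    and ode: "\<And>x. x \<in> S \<Longrightarrow> (f has_real_derivative D x) (at x) \<and>
                (D has_real_derivative DD x) (at x) \<and> k * D x - d * DD x = r"
    and cont: "continuous_on (closure S) f"
  obtains K A where "\<And>x. x \<in> closure S \<Longrightarrow> f x = r / k * x + K * exp (k / d * x) + A"
proof -
  obtain K where D: "\<And>x. x \<in> S \<Longrightarrow> D x = r / k + K * exp (k / d * x)"
    using first_order_linear_ode_solution[OF assms(1-3)] ode by metis
  let ?g = "\<lambda>x. f x - r / k * x - K * d / k * exp (k / d * x)"
  have "\<exists>A. \<forall>x\<in>S. ?g x = A"
  proof (rule has_field_derivative_zero_constant[OF \<open>convex S\<close>])
    fix x assume "x \<in> S"
    with ode have f': "(f has_real_derivative D x) (at x)" by blast
    have "(?g has_real_derivative 0) (at x)"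
      using D[OF \<open>x \<in> S\<close>] assms(2,3) by (auto intro!: derivative_eq_intros f' simp: field_simps)
    then show "(?g has_real_derivative 0) (at x within S)"
      by (rule has_field_derivative_at_within)
  qed
  then obtain A where "\<And>x. x \<in> S \<Longrightarrow> ?g x = A" by blast
  moreover have "continuous_on (closure S) ?g"
    by (intro continuous_intros cont)
  ultimately have "\<And>x. x \<in> closure S \<Longrightarrow> ?g x = A"
    by (metis (no_types, lifting) continuous_constant_on_closure)
  then show thesis
    by (intro that[of "K * d / k" A]) (auto simp: algebra_simps)
qed

lemma exp_coeff_zero_if_linear_growth:
  fixes a c K B C x0 :: real
  assumes "a > 0" and growth: "\<forall>x\<in>{x0..}. \<bar>c * x + K * exp (a * x) + B\<bar> \<le> C * (1 + x)"
  shows "K = 0"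
proof (rule ccontr)
  assume K: "K \<noteq> 0"
  have "filterlim (\<lambda>x. (c / K * x + exp (a * x) + B / K) / (1 + x)) at_top at_top"
    using \<open>a > 0\<close> by real_asymp
  then have "eventually (\<lambda>x. \<bar>C\<bar> / \<bar>K\<bar> < (c / K * x + exp (a * x) + B / K) / (1 + x)) at_top"
    by (simp add: filterlim_at_top_dense)
  moreover have "eventually (\<lambda>x. x0 \<le> x \<and> 0 \<le> x) at_top"
    by (intro eventually_conj eventually_ge_at_top)
  ultimately have "eventually (\<lambda>x. \<bar>C\<bar> / \<bar>K\<bar> < (c / K * x + exp (a * x) + B / K) / (1 + x)
      \<and> x0 \<le> x \<and> 0 \<le> x) at_top"
    by (rule eventually_conj)
  then obtain x where x: "x0 \<le> x" "0 \<le> x"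
    and big: "\<bar>C\<bar> / \<bar>K\<bar> < (c / K * x + exp (a * x) + B / K) / (1 + x)"
    using eventually_happens'[OF trivial_limit_at_top_linorder] by blast
  have "\<bar>C\<bar> / \<bar>K\<bar> * (1 + x) < c / K * x + exp (a * x) + B / K"
    using big x by (simp add: pos_less_divide_eq)
  then have "\<bar>K\<bar> * (\<bar>C\<bar> / \<bar>K\<bar> * (1 + x)) < \<bar>K\<bar> * (c / K * x + exp (a * x) + B / K)"
    using K by (intro mult_strict_left_mono) auto
  then have "\<bar>C\<bar> * (1 + x) < \<bar>K\<bar> * (c / K * x + exp (a * x) + B / K)"
    using K by simp
  also have "\<dots> \<le> \<bar>K\<bar> * \<bar>c / K * x + exp (a * x) + B / K\<bar>"
    by (intro mult_left_mono) auto
  also have "\<dots> = \<bar>c * x + K * exp (a * x) + B\<bar>"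
    using K by (simp add: abs_mult[symmetric] field_simps)
  also have "\<dots> \<le> C * (1 + x)" using growth x by simp
  finally have "\<bar>C\<bar> * (1 + x) < C * (1 + x)" .
  moreover have "C * (1 + x) \<le> \<bar>C\<bar> * (1 + x)" using x by (intro mult_right_mono) auto
  ultimately show False by simp
qed

text \<open>\<open>\<theta> x = \<theta>\<^sub>* - liquid_profile a c p (x\<^sub>* - x)\<close> solves \<open>\<theta>'' = a (\<theta>' - c)\<close> with \<open>\<theta> x\<^sub>* = \<theta>\<^sub>*\<close>
  and \<open>\<theta>' x\<^sub>* = p\<close>.\<close>

definition liquid_profile :: "real \<Rightarrow> real \<Rightarrow> real \<Rightarrow> real \<Rightarrow> real" where
  "liquid_profile a c p s = c * s + (p - c) * (1 - exp (- a * s)) / a"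

lemma liquid_profile_0 [simp]: "liquid_profile a c p 0 = 0"
  by (simp add: liquid_profile_def)

lemma has_real_derivative_liquid_profile:
  assumes "a \<noteq> 0"
  shows "(liquid_profile a c p has_real_derivative c + (p - c) * exp (- a * s)) (at s)"
  unfolding liquid_profile_def [abs_def] using assms
  by (auto intro!: derivative_eq_intros simp: field_simps)

lemma continuous_on_liquid_profile: "continuous_on S (liquid_profile a c p)"
proof -
  have "liquid_profile a c p = (\<lambda>s. c * s + (p - c) / a * (1 - exp (- a * s)))"
    by (simp add: liquid_profile_def fun_eq_iff)
  moreover have "continuous_on S (\<lambda>s. c * s + (p - c) / a * (1 - exp (- a * s)))"
    by (intro continuous_on_add continuous_on_mult continuous_on_diff continuous_on_exp
        continuous_on_minus continuous_on_const continuous_on_id)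
  ultimately show ?thesis by simp
qed

lemma liquid_profile_split:
  "liquid_profile a c p s = c * (s - (1 - exp (- a * s)) / a) + p * ((1 - exp (- a * s)) / a)"
  by (simp add: liquid_profile_def divide_inverse algebra_simps)

lemma one_minus_exp_div_bounds:
  fixes a s :: real
  assumes "a > 0" and "s \<ge> 0"
  shows "0 \<le> (1 - exp (- a * s)) / a" and "(1 - exp (- a * s)) / a \<le> s"
    and "(1 - exp (- a * s)) / a \<le> 1 / a"
  using assms exp_ge_add_one_self[of "- a * s"] by (auto simp: field_simps)

lemma liquid_profile_nonneg:
  assumes "a > 0" and "c \<ge> 0" and "p \<ge> 0" and "s \<ge> 0"
  shows "0 \<le> liquid_profile a c p s"
  unfolding liquid_profile_split
  using one_minus_exp_div_bounds[OF \<open>a > 0\<close> \<open>s \<ge> 0\<close>] assms by simp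

lemma liquid_profile_le:
  assumes "a > 0" and "c \<ge> 0" and "s \<ge> 0"
  shows "liquid_profile a c p s \<le> c * s + max p 0 / a"
proof -
  note bounds = one_minus_exp_div_bounds[OF \<open>a > 0\<close> \<open>s \<ge> 0\<close>]
  have "c * (s - (1 - exp (- a * s)) / a) \<le> c * s"
    using bounds \<open>c \<ge> 0\<close> by (simp add: mult_left_mono)
  moreover have "p * ((1 - exp (- a * s)) / a) \<le> max p 0 * (1 / a)"
    using bounds by (intro mult_mono) auto
  ultimately show ?thesis unfolding liquid_profile_split by simp
qed

lemma liquid_profile_ge:
  assumes "a > 0" and "s \<ge> 0"
  shows "c * s - \<bar>p - c\<bar> / a \<le> liquid_profile a c p s"
proof -
  have "0 \<le> 1 - exp (- a * s)" and "1 - exp (- a * s) \<le> 1" using assms by auto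
  then have "\<bar>(p - c) * (1 - exp (- a * s))\<bar> \<le> \<bar>p - c\<bar>"
    by (simp add: abs_mult mult_left_le)
  then have "- \<bar>p - c\<bar> \<le> (p - c) * (1 - exp (- a * s))"
    by linarith
  then have "- \<bar>p - c\<bar> / a \<le> (p - c) * (1 - exp (- a * s)) / a"
    using \<open>a > 0\<close> by (intro divide_right_mono) auto
  then show ?thesis
    unfolding liquid_profile_def by linarith
qed

lemma liquid_profile_neg_near_0:
  assumes "a \<noteq> 0" and "p < 0"
  obtains \<delta> where "\<delta> > 0" and "\<And>s. 0 < s \<Longrightarrow> s < \<delta> \<Longrightarrow> liquid_profile a c p s < 0"
  using DERIV_neg_dec_right[OF has_real_derivative_liquid_profile[OF \<open>a \<noteq> 0\<close>, of c p 0]] \<open>p < 0\<close>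
  by auto

lemma liquid_profile_deriv_pos:
  assumes "a > 0" and "c > 0" and "0 < s" and "0 < liquid_profile a c p s" and "s \<le> x"
  shows "0 < c + (p - c) * exp (- a * x)"
proof (cases "c \<le> p")
  case True
  then show ?thesis using \<open>c > 0\<close> by (simp add: add_pos_nonneg)
next
  case False
  \<comment> \<open>For \<open>p < c\<close> the profile is convex, so its slope at \<open>s\<close> exceeds its chord from \<open>0\<close>.\<close>
  define u where "u = exp (- a * s)"
  have "u * exp (a * s) = 1" by (simp add: u_def exp_minus)
  moreover have "1 + a * s \<le> exp (a * s)" by (rule exp_ge_add_one_self)
  ultimately have "u * (1 + a * s) \<le> 1"
    by (metis u_def exp_gt_zero less_imp_le mult_left_mono)
  then have "0 \<le> (p - c) * (u * (1 + a * s) - 1) / a"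
    using False \<open>a > 0\<close> by (intro divide_nonneg_pos mult_nonpos_nonpos) auto
  also have "\<dots> = s * (c + (p - c) * u) - liquid_profile a c p s"
    unfolding liquid_profile_def u_def using \<open>a > 0\<close> by (simp add: field_simps)
  finally have "0 < s * (c + (p - c) * u)"
    using \<open>0 < liquid_profile a c p s\<close> by linarith
  then have "0 < c + (p - c) * exp (- a * s)"
    using \<open>0 < s\<close> by (simp add: u_def zero_less_mult_iff)
  moreover have "(p - c) * exp (- a * s) \<le> (p - c) * exp (- a * x)"
    using False \<open>a > 0\<close> \<open>s \<le> x\<close> by (intro mult_left_mono_neg) auto
  ultimately show ?thesis by linarith
qed

lemma liquid_profile_strict_mono:
  assumes "a > 0" and "c > 0" and "0 < s" and "s < s'" and "0 < liquid_profile a c p s"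
  shows "liquid_profile a c p s < liquid_profile a c p s'"
  using \<open>s < s'\<close>
proof (rule DERIV_pos_imp_increasing)
  fix x assume "s \<le> x"
  with assms(1-3,5) have "0 < c + (p - c) * exp (- a * x)"
    by (rule liquid_profile_deriv_pos)
  then show "\<exists>y. (liquid_profile a c p has_real_derivative y) (at x) \<and> 0 < y"
    using has_real_derivative_liquid_profile[of a c p x] \<open>a > 0\<close> by auto
qed

lemma liquid_profile_solves_ode:
  assumes "a \<noteq> 0"
  shows "((\<lambda>x. \<theta> - liquid_profile a c p (x1 - x)) has_real_derivative
      c + (p - c) * exp (- a * (x1 - x))) (at x)"
    and "((\<lambda>x. c + (p - c) * exp (- a * (x1 - x))) has_real_derivative
      a * (p - c) * exp (- a * (x1 - x))) (at x)"
proof -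
  have "((\<lambda>x. x1 - x) has_real_derivative - 1) (at x)"
    by (auto intro!: derivative_eq_intros)
  with has_real_derivative_liquid_profile[OF assms]
  have "((\<lambda>x. liquid_profile a c p (x1 - x)) has_real_derivative
      (c + (p - c) * exp (- a * (x1 - x))) * - 1) (at x)"
    by (rule DERIV_chain2)
  from DERIV_diff[OF DERIV_const[of \<theta>] this]
  show "((\<lambda>x. \<theta> - liquid_profile a c p (x1 - x)) has_real_derivative
      c + (p - c) * exp (- a * (x1 - x))) (at x)"
    by (simp add: add.commute)
  show "((\<lambda>x. c + (p - c) * exp (- a * (x1 - x))) has_real_derivative
      a * (p - c) * exp (- a * (x1 - x))) (at x)"
    by (auto intro!: derivative_eq_intros simp: algebra_simps)
qed

lemma linear_ode_terminal_value_solution: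
  fixes f D DD :: "real \<Rightarrow> real"
  assumes "k \<noteq> 0" and "d \<noteq> 0" and "x0 < x1"
    and ode: "\<And>x. x \<in> {x0<..<x1} \<Longrightarrow> (f has_real_derivative D x) (at x) \<and>
                (D has_real_derivative DD x) (at x) \<and> k * D x - d * DD x = r"
    and cont: "continuous_on {x0..x1} f"
    and slope: "(f has_real_derivative p) (at x1 within {x0..x1})"
    and "x \<in> {x0..x1}"
  shows "f x = f x1 - liquid_profile (k / d) (r / k) p (x1 - x)"
proof -
  obtain K A where sol: "\<And>x. x \<in> {x0..x1} \<Longrightarrow> f x = r / k * x + K * exp (k / d * x) + A"
    using second_order_linear_ode_solution[of "{x0<..<x1}" k d f D DD r] assms by auto
  have "((\<lambda>x. r / k * x + K * exp (k / d * x) + A) has_real_derivative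
      r / k + K * (k / d) * exp (k / d * x1)) (at x1 within {x0..x1})"
    using assms(1,2) by (auto intro!: derivative_eq_intros)
  with slope have p: "p = r / k + K * (k / d) * exp (k / d * x1)"
    by (rule has_real_derivative_unique_on) (use sol \<open>x0 < x1\<close> in \<open>auto simp: at_within_Icc_at_left\<close>)
  have "exp (k / d * x1) * exp (- (k / d) * (x1 - x)) = exp (k / d * x)"
    using assms(2) by (simp add: exp_add [symmetric] field_simps)
  then show ?thesis
    using sol[OF \<open>x \<in> {x0..x1}\<close>] sol[of x1] \<open>x0 < x1\<close> assms(1,2)
    by (simp add: liquid_profile_def p field_simps)
qed

lemma linear_ode_linear_growth_solution:
  fixes f D DD :: "real \<Rightarrow> real"
  assumes "k > 0" and "d > 0"
    and ode: "\<And>x. x \<in> {x0<..} \<Longrightarrow> (f has_real_derivative D x) (at x) \<and>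
                (D has_real_derivative DD x) (at x) \<and> k * D x - d * DD x = r"
    and cont: "continuous_on {x0..} f"
    and growth: "\<forall>x\<in>{x0..}. \<bar>f x\<bar> \<le> C * (1 + x)"
  shows "\<forall>x\<in>{x0..}. f x = f x0 + r / k * (x - x0)"
proof -
  obtain K B where sol: "\<And>x. x \<in> {x0..} \<Longrightarrow> f x = r / k * x + K * exp (k / d * x) + B"
    using second_order_linear_ode_solution[of "{x0<..}" k d f D DD r] assms by auto
  have "0 < k / d" using assms(1,2) by simp
  moreover have "\<forall>x\<in>{x0..}. \<bar>r / k * x + K * exp (k / d * x) + B\<bar> \<le> C * (1 + x)"
    using growth sol by simp
  ultimately have "K = 0" by (rule exp_coeff_zero_if_linear_growth)
  then show ?thesis using sol assms(1) by (simp add: field_simps)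
qed

lemma two_minus_mult_exp_le:
  fixes x :: real
  assumes "x \<ge> 0"
  shows "(2 - x) * exp x \<le> 2 + x"
proof -
  have "(\<lambda>x. 2 + x - (2 - x) * exp x) 0 \<le> (\<lambda>x. 2 + x - (2 - x) * exp x) x"
  proof (rule DERIV_nonneg_imp_nondecreasing[OF assms])
    fix z :: real
    have "((\<lambda>x. 2 + x - (2 - x) * exp x) has_real_derivative 1 - (1 - z) * exp z) (at z)"
      by (auto intro!: derivative_eq_intros simp: algebra_simps)
    moreover have "(1 - z) * exp z \<le> 1"
      using exp_ge_add_one_self[of "- z"] by (simp add: exp_minus field_simps)
    ultimately show "\<exists>y. ((\<lambda>x. 2 + x - (2 - x) * exp x) has_real_derivative y) (at z) \<and> 0 \<le> y"
      by fastforce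
  qed
  then show ?thesis by simp
qed

lemma exp_remainder_quotient_antimono:
  fixes x y :: real
  assumes "0 < x" and "x \<le> y"
  shows "(y - 1 + exp (- y)) / y\<^sup>2 \<le> (x - 1 + exp (- x)) / x\<^sup>2"
proof (rule DERIV_nonpos_imp_nonincreasing[OF \<open>x \<le> y\<close>])
  fix z :: real assume "x \<le> z"
  then have "z > 0" using \<open>0 < x\<close> by simp
  have "((\<lambda>z. (z - 1 + exp (- z)) / z\<^sup>2) has_real_derivative
      - exp (- z) * (2 + z - (2 - z) * exp z) / z ^ 3) (at z)"
    using \<open>z > 0\<close>
    by (auto intro!: derivative_eq_intros simp: exp_minus field_simps power2_eq_square power3_eq_cube)
  moreover have "- exp (- z) * (2 + z - (2 - z) * exp z) / z ^ 3 \<le> 0"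
    using two_minus_mult_exp_le[of z] \<open>z > 0\<close> by (simp add: divide_nonpos_pos mult_nonneg_nonneg)
  ultimately show "\<exists>d. ((\<lambda>z. (z - 1 + exp (- z)) / z\<^sup>2) has_real_derivative d) (at z) \<and> d \<le> 0"
    by blast
qed

lemma one_minus_exp_quotient_antimono:
  fixes x y :: real
  assumes "0 < x" and "x \<le> y"
  shows "(1 - exp (- y)) / y\<^sup>2 \<le> (1 - exp (- x)) / x\<^sup>2"
proof (rule DERIV_nonpos_imp_nonincreasing[OF \<open>x \<le> y\<close>])
  fix z :: real assume "x \<le> z"
  then have "z > 0" using \<open>0 < x\<close> by simp
  have "((\<lambda>z. (1 - exp (- z)) / z\<^sup>2) has_real_derivative
      exp (- z) * (z + 2 - 2 * exp z) / z ^ 3) (at z)"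
    using \<open>z > 0\<close>
    by (auto intro!: derivative_eq_intros simp: exp_minus field_simps power2_eq_square power3_eq_cube)
  moreover have "z + 2 - 2 * exp z \<le> 0"
    using exp_ge_add_one_self[of z] \<open>z > 0\<close> by linarith
  then have "exp (- z) * (z + 2 - 2 * exp z) / z ^ 3 \<le> 0"
    using \<open>z > 0\<close> by (simp add: divide_nonpos_pos mult_nonneg_nonpos)
  ultimately show "\<exists>d. ((\<lambda>z. (1 - exp (- z)) / z\<^sup>2) has_real_derivative d) (at z) \<and> d \<le> 0"
    by blast
qed

lemma linear_growth_bound:
  fixes v x0 x :: real
  assumes "0 \<le> v" and "0 \<le> x0" and "x0 \<le> x"
  shows "\<bar>c + v * (x - x0)\<bar> \<le> (\<bar>c\<bar> + v) * (1 + x)"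
proof -
  have "0 \<le> v * (x - x0)" and "0 \<le> v * x0" and "0 \<le> \<bar>c\<bar> * x"
    using assms by simp_all
  then have "\<bar>c + v * (x - x0)\<bar> \<le> \<bar>c\<bar> + v * x - v * x0"
    using abs_triangle_ineq[of c "v * (x - x0)"] by (simp add: right_diff_distrib)
  also have "\<dots> \<le> (\<bar>c\<bar> + v) * (1 + x)"
    using \<open>0 \<le> v * x0\<close> \<open>0 \<le> \<bar>c\<bar> * x\<close> \<open>0 \<le> v\<close> by (simp add: algebra_simps)
  finally show ?thesis .
qed

locale stefan_coefficients =
  fixes k1 k2 d1 d2 l r :: real
  assumes k1_pos: "0 < k1" and k2_pos: "0 < k2" and d1_pos: "0 < d1" and d2_pos: "0 < d2"
    and r_pos: "0 < r"
begin

definition decay_rate :: "real \<Rightarrow> real" where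
  "decay_rate j = k1 * j / d1"

definition liquid_slope :: "real \<Rightarrow> real" where
  "liquid_slope j = r / (k1 * j)"

definition vapor_slope :: "real \<Rightarrow> real" where
  "vapor_slope j = r / (k2 * j)"

text \<open>The liquid gradient at the dryout point forced by the Stefan condition
  \<open>l j + d2 \<theta>2'(x\<^sub>*) - d1 \<theta>1'(x\<^sub>*) = 0\<close> once \<open>\<theta>2' = vapor_slope j\<close>.\<close>

definition interface_gradient :: "real \<Rightarrow> real" where
  "interface_gradient j = (l * j + d2 * vapor_slope j) / d1"

definition temperature_drop :: "real \<Rightarrow> real \<Rightarrow> real" where
  "temperature_drop j = liquid_profile (decay_rate j) (liquid_slope j) (interface_gradient j)"

lemma decay_rate_pos: "0 < j \<Longrightarrow> 0 < decay_rate j"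
  using k1_pos d1_pos by (simp add: decay_rate_def)

lemma liquid_slope_pos: "0 < j \<Longrightarrow> 0 < liquid_slope j"
  using k1_pos r_pos by (simp add: liquid_slope_def)

lemma vapor_slope_pos: "0 < j \<Longrightarrow> 0 < vapor_slope j"
  using k2_pos r_pos by (simp add: vapor_slope_def)

lemma interface_gradient_nonneg_iff:
  assumes "0 < j"
  shows "0 \<le> interface_gradient j \<longleftrightarrow> - l \<le> d2 * r / (k2 * j\<^sup>2)"
proof -
  have eq: "interface_gradient j = j / d1 * (l + d2 * r / (k2 * j\<^sup>2))"
    using assms k2_pos d1_pos
    by (simp add: interface_gradient_def vapor_slope_def field_simps power2_eq_square)
  have "0 < j / d1" using assms d1_pos by simp
  then have "0 \<le> j / d1 * (l + d2 * r / (k2 * j\<^sup>2)) \<longleftrightarrow> 0 \<le> l + d2 * r / (k2 * j\<^sup>2)"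
    by (simp add: zero_le_mult_iff del: times_divide_eq_left)
  then show ?thesis unfolding eq by linarith
qed

lemma stefan_system_explicit:
  assumes "0 < j" and "stefan_system k1 k2 d1 d2 l j r ths thin xs th1 th2"
  shows "0 < xs" and "temperature_drop j xs = ths - thin"
    and "\<forall>x\<in>{0..xs}. th1 x = ths - temperature_drop j (xs - x)"
    and "\<forall>x\<in>{xs..}. th2 x = ths + vapor_slope j * (x - xs)"
proof -
  from assms(2) obtain D1 DD1 D2 DD2 p1 p2 C where
    "0 < xs" and cont1: "continuous_on {0..xs} th1" and cont2: "continuous_on {xs..} th2"
    and ode1: "\<forall>x\<in>{0<..<xs}. (th1 has_real_derivative D1 x) (at x) \<and>
                 (D1 has_real_derivative DD1 x) (at x) \<and> k1 * j * D1 x - d1 * DD1 x = r"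
    and ode2: "\<forall>x\<in>{xs<..}. (th2 has_real_derivative D2 x) (at x) \<and>
                 (D2 has_real_derivative DD2 x) (at x) \<and> k2 * j * D2 x - d2 * DD2 x = r"
    and "th1 xs = ths" and "th2 xs = ths" and "th1 0 = thin"
    and p1: "(th1 has_real_derivative p1) (at xs within {0..xs})"
    and p2: "(th2 has_real_derivative p2) (at xs within {xs..})"
    and stefan: "l * j + d2 * p2 - d1 * p1 = 0"
    and growth: "\<forall>x\<in>{xs..}. \<bar>th2 x\<bar> \<le> C * (1 + x)"
    unfolding stefan_system_def by blast
  have vapor: "\<forall>x\<in>{xs..}. th2 x = ths + vapor_slope j * (x - xs)"
    using linear_ode_linear_growth_solution[of "k2 * j" d2 xs th2 D2 DD2 r C]
      ode2 cont2 growth \<open>th2 xs = ths\<close> \<open>0 < j\<close> k2_pos d2_pos by (simp add: vapor_slope_def)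
  have "((\<lambda>x. ths + vapor_slope j * (x - xs)) has_real_derivative vapor_slope j) (at xs within {xs..})"
    by (auto intro!: derivative_eq_intros)
  with p2 have "p2 = vapor_slope j"
    by (rule has_real_derivative_unique_on) (use vapor in \<open>auto simp: at_within_Ici_at_right\<close>)
  with stefan have "p1 = interface_gradient j"
    using d1_pos by (simp add: interface_gradient_def field_simps)
  then have liquid: "\<forall>x\<in>{0..xs}. th1 x = ths - temperature_drop j (xs - x)"
    using linear_ode_terminal_value_solution[of "k1 * j" d1 0 xs th1 D1 DD1 r p1]
      ode1 cont1 p1 \<open>th1 xs = ths\<close> \<open>0 < xs\<close> \<open>0 < j\<close> k1_pos d1_pos
    by (simp add: temperature_drop_def decay_rate_def liquid_slope_def)
  show "0 < xs" by fact
  show "\<forall>x\<in>{0..xs}. th1 x = ths - temperature_drop j (xs - x)" by (fact liquid)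
  show "\<forall>x\<in>{xs..}. th2 x = ths + vapor_slope j * (x - xs)" by (fact vapor)
  show "temperature_drop j xs = ths - thin"
    using liquid \<open>0 < xs\<close> \<open>th1 0 = thin\<close> by auto
qed

lemma stefan_system_of_explicit:
  assumes "0 < j" and "0 < xs" and "temperature_drop j xs = ths - thin"
  shows "stefan_system k1 k2 d1 d2 l j r ths thin xs
    (\<lambda>x. ths - temperature_drop j (xs - x)) (\<lambda>x. ths + vapor_slope j * (x - xs))"
proof -
  let ?a = "decay_rate j" and ?c = "liquid_slope j" and ?p = "interface_gradient j"
  let ?th1 = "\<lambda>x. ths - liquid_profile ?a ?c ?p (xs - x)"
    and ?th2 = "\<lambda>x. ths + vapor_slope j * (x - xs)"
  let ?D1 = "\<lambda>x. ?c + (?p - ?c) * exp (- ?a * (xs - x))"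
    and ?DD1 = "\<lambda>x. ?a * (?p - ?c) * exp (- ?a * (xs - x))"
  have "?a \<noteq> 0" using decay_rate_pos[OF \<open>0 < j\<close>] by simp
  note th1' = liquid_profile_solves_ode(1)[OF this, of ths ?c ?p xs]
    and D1' = liquid_profile_solves_ode(2)[OF this, of ?c ?p xs]
  have ode1: "k1 * j * ?D1 x - d1 * ?DD1 x = r" for x
    using k1_pos d1_pos \<open>0 < j\<close> by (simp add: decay_rate_def liquid_slope_def field_simps)
  have th2': "(?th2 has_real_derivative vapor_slope j) (at x)" for x
    by (auto intro!: derivative_eq_intros)
  show ?thesis
    unfolding stefan_system_def temperature_drop_def
  proof (intro conjI)
    show "0 < xs" by fact
    show "continuous_on {0..xs} ?th1" and "continuous_on {xs..} ?th2"
      using th1' th2' by (meson DERIV_isCont continuous_at_imp_continuous_on)+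
    show "\<exists>D DD. \<forall>x\<in>{0<..<xs}. (?th1 has_real_derivative D x) (at x) \<and>
        (D has_real_derivative DD x) (at x) \<and> k1 * j * D x - d1 * DD x = r"
      using th1' D1' ode1 by (intro exI[of _ ?D1] exI[of _ ?DD1]) blast
    show "\<exists>D DD. \<forall>x\<in>{xs<..}. (?th2 has_real_derivative D x) (at x) \<and>
        (D has_real_derivative DD x) (at x) \<and> k2 * j * D x - d2 * DD x = r"
      using th2' k2_pos \<open>0 < j\<close>
      by (intro exI[of _ "\<lambda>_. vapor_slope j"] exI[of _ "\<lambda>_. 0"]) (simp add: vapor_slope_def)
    show "?th1 xs = ths" and "?th2 xs = ths" by simp_all
    show "\<exists>p1 p2. (?th1 has_real_derivative p1) (at xs within {0..xs}) \<and>
        (?th2 has_real_derivative p2) (at xs within {xs..}) \<and> l * j + d2 * p2 - d1 * p1 = 0"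
    proof (intro exI conjI)
      show "(?th1 has_real_derivative ?D1 xs) (at xs within {0..xs})"
        using th1' by (rule has_field_derivative_at_within)
      show "(?th2 has_real_derivative vapor_slope j) (at xs within {xs..})"
        using th2' by (rule has_field_derivative_at_within)
      show "l * j + d2 * vapor_slope j - d1 * ?D1 xs = 0"
        using d1_pos by (simp add: interface_gradient_def)
    qed
    show "?th1 0 = thin" using assms(3) by (simp add: temperature_drop_def)
    show "\<exists>C. \<forall>x\<in>{xs..}. \<bar>?th2 x\<bar> \<le> C * (1 + x)"
      using linear_growth_bound vapor_slope_pos[OF \<open>0 < j\<close>] \<open>0 < xs\<close>
      by (intro exI[of _ "\<bar>ths\<bar> + vapor_slope j"]) (simp add: less_imp_le)
  qed
qed

lemma temperature_drop_strict_mono: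
  assumes "0 < j" and "0 < s" and "s < s'" and "0 < temperature_drop j s"
  shows "temperature_drop j s < temperature_drop j s'"
  using liquid_profile_strict_mono[OF decay_rate_pos[OF assms(1)] liquid_slope_pos[OF assms(1)] assms(2,3)]
    assms(4)
  unfolding temperature_drop_def by blast

lemma temperature_drop_less_imp_less:
  assumes "0 < j" and "0 < s" and "0 < temperature_drop j s"
    and "temperature_drop j s' < temperature_drop j s"
  shows "s' < s"
proof (rule ccontr)
  assume "\<not> s' < s"
  then consider "s' = s" | "s < s'" by linarith
  then show False
    using temperature_drop_strict_mono[of j s s'] assms by cases auto
qed

lemma stefan_system_unique:
  assumes "0 < j" and "thin < ths"
    and sys: "stefan_system k1 k2 d1 d2 l j r ths thin xs th1 th2"
    and sys': "stefan_system k1 k2 d1 d2 l j r ths thin xs' th1' th2'"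
  shows "xs = xs' \<and> (\<forall>x\<in>{0..xs}. th1 x = th1' x) \<and> (\<forall>x\<in>{xs..}. th2 x = th2' x)"
proof -
  note E = stefan_system_explicit[OF \<open>0 < j\<close> sys]
    and E' = stefan_system_explicit[OF \<open>0 < j\<close> sys']
  have "xs = xs'"
  proof (rule ccontr)
    assume "xs \<noteq> xs'"
    then consider "xs < xs'" | "xs' < xs" by linarith
    then show False
    proof cases
      case 1
      with temperature_drop_strict_mono[OF \<open>0 < j\<close> E(1) 1] E(2) E'(2) \<open>thin < ths\<close>
      show False by simp
    next
      case 2
      with temperature_drop_strict_mono[OF \<open>0 < j\<close> E'(1) 2] E(2) E'(2) \<open>thin < ths\<close>
      show False by simp
    qed
  qed
  with E(3,4) E'(3,4) show ?thesis by auto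
qed

lemma stefan_problem_exists:
  assumes "0 < j" and "thin < ths" and "- l \<le> d2 * r / (k2 * j\<^sup>2)"
  shows "\<exists>xs th1 th2. stefan_problem k1 k2 d1 d2 l j r ths thin xs th1 th2"
proof -
  let ?a = "decay_rate j" and ?c = "liquid_slope j" and ?p = "interface_gradient j"
  have "0 < ?a" "0 < ?c" using \<open>0 < j\<close> by (simp_all add: decay_rate_pos liquid_slope_pos)
  have "0 \<le> ?p" using interface_gradient_nonneg_iff[OF \<open>0 < j\<close>] assms(3) by simp
  define T where "T = (ths - thin + \<bar>?p - ?c\<bar> / ?a) / ?c"
  have "0 \<le> T" using \<open>0 < ?a\<close> \<open>0 < ?c\<close> \<open>thin < ths\<close> by (simp add: T_def)
  have "ths - thin = ?c * T - \<bar>?p - ?c\<bar> / ?a" using \<open>0 < ?c\<close> by (simp add: T_def)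
  also have "\<dots> \<le> liquid_profile ?a ?c ?p T" using \<open>0 < ?a\<close> \<open>0 \<le> T\<close> by (rule liquid_profile_ge)
  finally have "ths - thin \<le> liquid_profile ?a ?c ?p T" .
  moreover have "liquid_profile ?a ?c ?p 0 \<le> ths - thin" using \<open>thin < ths\<close> by simp
  ultimately obtain xs where "0 \<le> xs" and drop: "temperature_drop j xs = ths - thin"
    using IVT'[OF _ _ \<open>0 \<le> T\<close> continuous_on_liquid_profile] unfolding temperature_drop_def by blast
  moreover from this have "0 < xs" using \<open>thin < ths\<close> by (cases "xs = 0") (auto simp: temperature_drop_def)
  ultimately have "stefan_system k1 k2 d1 d2 l j r ths thin xs
      (\<lambda>x. ths - temperature_drop j (xs - x)) (\<lambda>x. ths + vapor_slope j * (x - xs))"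
    using \<open>0 < j\<close> by (intro stefan_system_of_explicit)
  moreover have "\<forall>x\<in>{0..xs}. ths - temperature_drop j (xs - x) \<le> ths"
    using liquid_profile_nonneg \<open>0 < ?a\<close> \<open>0 < ?c\<close> \<open>0 \<le> ?p\<close> by (simp add: temperature_drop_def)
  ultimately show ?thesis unfolding stefan_problem_def by blast
qed

lemma stefan_problem_gradient_nonneg:
  assumes "0 < j" and "stefan_problem k1 k2 d1 d2 l j r ths thin xs th1 th2"
  shows "- l \<le> d2 * r / (k2 * j\<^sup>2)"
proof (rule ccontr)
  assume "\<not> - l \<le> d2 * r / (k2 * j\<^sup>2)"
  then have "interface_gradient j < 0" using interface_gradient_nonneg_iff[OF \<open>0 < j\<close>] by simp
  moreover have "decay_rate j \<noteq> 0" using decay_rate_pos[OF \<open>0 < j\<close>] by simp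
  ultimately obtain \<delta> where "0 < \<delta>" and neg: "\<And>s. 0 < s \<Longrightarrow> s < \<delta> \<Longrightarrow> temperature_drop j s < 0"
    unfolding temperature_drop_def by (metis liquid_profile_neg_near_0)
  from assms(2) have sys: "stefan_system k1 k2 d1 d2 l j r ths thin xs th1 th2"
    and below: "\<forall>x\<in>{0..xs}. th1 x \<le> ths"
    unfolding stefan_problem_def by auto
  note E = stefan_system_explicit[OF \<open>0 < j\<close> sys]
  define h where "h = min (\<delta> / 2) xs"
  have "0 < h" "h < \<delta>" "h \<le> xs" using \<open>0 < \<delta>\<close> E(1) by (auto simp: h_def)
  then have h: "xs - h \<in> {0..xs}" by simp
  have "th1 (xs - h) = ths - temperature_drop j h" and "th1 (xs - h) \<le> ths"
    using E(3)[rule_format, OF h] below[rule_format, OF h] by simp_all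
  with neg[OF \<open>0 < h\<close> \<open>h < \<delta>\<close>] show False by simp
qed

lemma unique_solution_iff:
  assumes "0 < j" and "thin < ths"
  shows "- l \<le> d2 * r / (k2 * j\<^sup>2) \<longleftrightarrow> stefan_unique_solution k1 k2 d1 d2 l j r ths thin"
proof
  assume "- l \<le> d2 * r / (k2 * j\<^sup>2)"
  then show "stefan_unique_solution k1 k2 d1 d2 l j r ths thin"
    using stefan_problem_exists[OF assms] stefan_system_unique[OF assms]
    unfolding stefan_unique_solution_def stefan_problem_def by blast
next
  assume "stefan_unique_solution k1 k2 d1 d2 l j r ths thin"
  then obtain xs th1 th2 where "stefan_problem k1 k2 d1 d2 l j r ths thin xs th1 th2"
    unfolding stefan_unique_solution_def by blast
  with \<open>0 < j\<close> show "- l \<le> d2 * r / (k2 * j\<^sup>2)" by (rule stefan_problem_gradient_nonneg)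
qed

lemma dryout_point_decreasing_in_inlet_temperature:
  assumes "0 < j" and "thin < thin'" and "thin' < ths"
    and sys: "stefan_system k1 k2 d1 d2 l j r ths thin xs th1 th2"
    and sys': "stefan_system k1 k2 d1 d2 l j r ths thin' xs' th1' th2'"
  shows "xs' < xs"
proof -
  note E = stefan_system_explicit[OF \<open>0 < j\<close> sys]
    and E' = stefan_system_explicit[OF \<open>0 < j\<close> sys']
  show ?thesis
    by (rule temperature_drop_less_imp_less[OF \<open>0 < j\<close> E(1)]) (use E(2) E'(2) assms(2,3) in auto)
qed

lemma temperature_drop_eq_exp_quotients:
  assumes "0 < j" and "0 < s"
  defines "x \<equiv> k1 * j * s / d1"
  shows "temperature_drop j s = r * s\<^sup>2 / d1 * ((x - 1 + exp (- x)) / x\<^sup>2)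
    + l / k1 * (1 - exp (- x)) + d2 * r * k1 * s\<^sup>2 / (k2 * d1\<^sup>2) * ((1 - exp (- x)) / x\<^sup>2)"
proof -
  have "liquid_slope j * s + (interface_gradient j - liquid_slope j) * (1 - E) / decay_rate j
      = r * s\<^sup>2 / d1 * ((x - 1 + E) / x\<^sup>2) + l / k1 * (1 - E)
        + d2 * r * k1 * s\<^sup>2 / (k2 * d1\<^sup>2) * ((1 - E) / x\<^sup>2)" for E
    using assms(1,2) k1_pos k2_pos d1_pos unfolding x_def
    by (simp add: decay_rate_def liquid_slope_def interface_gradient_def vapor_slope_def
        field_simps power2_eq_square)
  moreover have "exp (- decay_rate j * s) = exp (- x)" by (simp add: decay_rate_def x_def)
  ultimately show ?thesis
    unfolding temperature_drop_def liquid_profile_def by (simp only:)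
qed

lemma temperature_drop_strict_antimono_flux:
  assumes "l < 0" and "0 < j" and "j < j'" and "0 < s"
  shows "temperature_drop j' s < temperature_drop j s"
proof -
  define x y where "x = k1 * j * s / d1" and "y = k1 * j' * s / d1"
  have "0 < x" and "x < y"
    using assms k1_pos d1_pos by (simp_all add: x_def y_def divide_strict_right_mono)
  have "r * s\<^sup>2 / d1 * ((y - 1 + exp (- y)) / y\<^sup>2) \<le> r * s\<^sup>2 / d1 * ((x - 1 + exp (- x)) / x\<^sup>2)"
    using exp_remainder_quotient_antimono[OF \<open>0 < x\<close>] \<open>x < y\<close> r_pos d1_pos
    by (intro mult_left_mono) auto
  moreover have "l / k1 * (1 - exp (- y)) < l / k1 * (1 - exp (- x))"
    using \<open>x < y\<close> \<open>l < 0\<close> k1_pos by (intro mult_strict_left_mono_neg) (auto simp: divide_neg_pos)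
  moreover have "d2 * r * k1 * s\<^sup>2 / (k2 * d1\<^sup>2) * ((1 - exp (- y)) / y\<^sup>2)
      \<le> d2 * r * k1 * s\<^sup>2 / (k2 * d1\<^sup>2) * ((1 - exp (- x)) / x\<^sup>2)"
    using one_minus_exp_quotient_antimono[OF \<open>0 < x\<close>] \<open>x < y\<close> r_pos k1_pos k2_pos d1_pos d2_pos
    by (intro mult_left_mono) auto
  ultimately show ?thesis
    using temperature_drop_eq_exp_quotients[of j s] temperature_drop_eq_exp_quotients[of j' s]
      assms
    unfolding x_def y_def by simp
qed

lemma dryout_point_increasing_in_flux:
  assumes "l < 0" and "0 < j" and "j < j'" and "thin < ths"
    and sys: "stefan_system k1 k2 d1 d2 l j r ths thin xs th1 th2"
    and sys': "stefan_system k1 k2 d1 d2 l j' r ths thin xs' th1' th2'"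
  shows "xs < xs'"
proof -
  have "0 < j'" using assms by simp
  note E = stefan_system_explicit[OF \<open>0 < j\<close> sys]
    and E' = stefan_system_explicit[OF \<open>0 < j'\<close> sys']
  have "temperature_drop j' xs < temperature_drop j xs"
    using temperature_drop_strict_antimono_flux assms E(1) by blast
  with E(2) E'(2) \<open>thin < ths\<close> show ?thesis
    by (intro temperature_drop_less_imp_less[OF \<open>0 < j'\<close> E'(1)]) auto
qed

lemma temperature_drop_le:
  assumes "l \<le> 0" and "0 < j" and "0 \<le> s"
  shows "temperature_drop j s \<le> r * s / (k1 * j) + d2 * r / (k1 * k2 * j\<^sup>2)"
proof -
  have "l * j \<le> 0" using assms by (simp add: mult_nonpos_nonneg)
  then have "interface_gradient j \<le> d2 * vapor_slope j / d1"
    unfolding interface_gradient_def using d1_pos by (intro divide_right_mono) auto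
  moreover have "0 \<le> d2 * vapor_slope j / d1"
    using d1_pos d2_pos vapor_slope_pos[OF \<open>0 < j\<close>] by simp
  ultimately have "max (interface_gradient j) 0 \<le> d2 * vapor_slope j / d1" by simp
  then have "max (interface_gradient j) 0 / decay_rate j \<le> d2 * vapor_slope j / d1 / decay_rate j"
    using decay_rate_pos[OF \<open>0 < j\<close>] by (intro divide_right_mono) auto
  also have "\<dots> = d2 * r / (k1 * k2 * j\<^sup>2)"
    using \<open>0 < j\<close> k1_pos k2_pos d1_pos
    by (simp add: decay_rate_def vapor_slope_def power2_eq_square field_simps)
  finally show ?thesis
    using liquid_profile_le[OF decay_rate_pos[OF \<open>0 < j\<close>] less_imp_le[OF liquid_slope_pos[OF \<open>0 < j\<close>]]
        \<open>0 \<le> s\<close>, of "interface_gradient j"]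
    by (simp add: temperature_drop_def liquid_slope_def)
qed

lemma dryout_point_unbounded_in_flux:
  assumes "l \<le> 0" and "thin < ths"
  shows "\<exists>J > 0. \<forall>j \<ge> J. \<forall>xs th1 th2.
    stefan_system k1 k2 d1 d2 l j r ths thin xs th1 th2 \<longrightarrow> M \<le> xs"
proof -
  define B where "B = r * \<bar>M\<bar> / k1 + d2 * r / (k1 * k2)"
  have "((\<lambda>j. B / j) \<longlongrightarrow> 0) at_top"
    by (intro tendsto_divide_0[OF tendsto_const] filterlim_at_top_imp_at_infinity filterlim_ident)
  then have "eventually (\<lambda>j. B / j < ths - thin) at_top"
    using \<open>thin < ths\<close> by (intro order_tendstoD(2)) auto
  then obtain J where J: "\<And>j. J \<le> j \<Longrightarrow> B / j < ths - thin"
    by (auto simp: eventually_at_top_linorder)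
  have bound: "M \<le> xs"
    if "max J 1 \<le> j" and sys: "stefan_system k1 k2 d1 d2 l j r ths thin xs th1 th2" for j xs th1 th2
  proof (rule ccontr)
    assume "\<not> M \<le> xs"
    have "1 \<le> j" and "0 < j" using that(1) by simp_all
    have "0 < xs" and drop: "temperature_drop j xs = ths - thin"
      using stefan_system_explicit(1,2)[OF \<open>0 < j\<close> sys] by auto
    have "ths - thin \<le> r * xs / (k1 * j) + d2 * r / (k1 * k2 * j\<^sup>2)"
      using temperature_drop_le[OF \<open>l \<le> 0\<close> \<open>0 < j\<close>, of xs] \<open>0 < xs\<close> drop by simp
    also have "r * xs / (k1 * j) \<le> r * \<bar>M\<bar> / k1 / j"
      using \<open>\<not> M \<le> xs\<close> \<open>0 < j\<close> k1_pos r_pos by (simp add: divide_right_mono)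
    also have "d2 * r / (k1 * k2 * j\<^sup>2) \<le> d2 * r / (k1 * k2) / j"
      using \<open>1 \<le> j\<close> k1_pos k2_pos d2_pos r_pos
      by (simp add: divide_left_mono power2_eq_square mult.assoc)
    also have "r * \<bar>M\<bar> / k1 / j + d2 * r / (k1 * k2) / j = B / j"
      by (simp add: B_def add_divide_distrib)
    also have "\<dots> < ths - thin" using J that(1) by simp
    finally show False by simp
  qed
  show ?thesis
  proof (intro exI[of _ "max J 1"] conjI allI impI)
    show "0 < max J 1" by simp
  qed (rule bound)
qed

lemma dryout_point_unbounded_in_inlet_temperature:
  assumes "0 < j"
  shows "\<exists>T < ths. \<forall>thin \<le> T. \<forall>xs th1 th2.
    stefan_system k1 k2 d1 d2 l j r ths thin xs th1 th2 \<longrightarrow> M \<le> xs"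
proof -
  have "bounded (temperature_drop j ` {0..M})"
    unfolding temperature_drop_def
    by (rule compact_imp_bounded[OF compact_continuous_image[OF continuous_on_liquid_profile compact_Icc]])
  then obtain B where B: "\<And>s. s \<in> {0..M} \<Longrightarrow> \<bar>temperature_drop j s\<bar> \<le> B"
    unfolding bounded_real by blast
  have bound: "M \<le> xs"
    if "thin \<le> ths - \<bar>B\<bar> - 1" and sys: "stefan_system k1 k2 d1 d2 l j r ths thin xs th1 th2"
    for thin xs th1 th2
  proof (rule ccontr)
    assume "\<not> M \<le> xs"
    have "0 < xs" and drop: "temperature_drop j xs = ths - thin"
      using stefan_system_explicit(1,2)[OF \<open>0 < j\<close> sys] by auto
    with \<open>\<not> M \<le> xs\<close> have "\<bar>ths - thin\<bar> \<le> B" using B[of xs] by simp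
    with that(1) show False by linarith
  qed
  show ?thesis
  proof (intro exI[of _ "ths - \<bar>B\<bar> - 1"] conjI allI impI)
    show "ths - \<bar>B\<bar> - 1 < ths" by simp
  qed (rule bound)
qed

end

theorem theorem4p1:
  fixes k1 k2 d1 d2 l r ths :: real
  assumes "k1 > 0" and "k2 > 0" and "d1 > 0" and "d2 > 0" and "l < 0" and "r > 0"
  shows
    "(\<forall>j thin. j > 0 \<longrightarrow> thin < ths \<longrightarrow>
        ((- l) \<le> d2 * r / (k2 * j\<^sup>2) \<longleftrightarrow> stefan_unique_solution k1 k2 d1 d2 l j r ths thin))
     \<and> (\<forall>j thin thin' xs th1 th2 xs' th1' th2'.
          j > 0 \<longrightarrow> thin < thin' \<longrightarrow> thin' < ths \<longrightarrow>
          stefan_system k1 k2 d1 d2 l j r ths thin xs th1 th2 \<longrightarrow>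
          stefan_system k1 k2 d1 d2 l j r ths thin' xs' th1' th2' \<longrightarrow> xs' < xs)
     \<and> (\<forall>j j' thin xs th1 th2 xs' th1' th2'.
          0 < j \<longrightarrow> j < j' \<longrightarrow> thin < ths \<longrightarrow>
          stefan_system k1 k2 d1 d2 l j r ths thin xs th1 th2 \<longrightarrow>
          stefan_system k1 k2 d1 d2 l j' r ths thin xs' th1' th2' \<longrightarrow> xs < xs')
     \<and> (\<forall>thin < ths. \<forall>M. \<exists>J > 0. \<forall>j \<ge> J. \<forall>xs th1 th2.
          stefan_system k1 k2 d1 d2 l j r ths thin xs th1 th2 \<longrightarrow> M \<le> xs)
     \<and> (\<forall>j > 0. \<forall>M. \<exists>T < ths. \<forall>thin \<le> T. \<forall>xs th1 th2.
          stefan_system k1 k2 d1 d2 l j r ths thin xs th1 th2 \<longrightarrow> M \<le> xs)"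
proof -
  interpret stefan_coefficients k1 k2 d1 d2 l r
    using assms by unfold_locales
  show ?thesis
    apply (intro conjI)
    subgoal using unique_solution_iff by blast
    subgoal using dryout_point_decreasing_in_inlet_temperature by blast
    subgoal using dryout_point_increasing_in_flux[OF \<open>l < 0\<close>] by blast
    subgoal using dryout_point_unbounded_in_flux[OF less_imp_le[OF \<open>l < 0\<close>]] by blast
    subgoal using dryout_point_unbounded_in_inlet_temperature by blast
    done
qed

end
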